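(* Let $(V,E)$ be a finite graph and $p\in[0,1]$. Define rates on $\{0,1\}^E\times\{-1,1\}^V$ as follows: (a) if $\sigma'=\sigma$ and there is $e\in E$ with $\eta'=\eta^e$ and $\gamma_\eta(e)=1$, then $c((\eta,\sigma),(\eta',\sigma'))=\big((1-p)\mathbf 1_{\eta(e)=1}+p\mathbf 1_{\eta(e)=0}\big)\mathbf 1_{(\eta,\sigma)\in\mathcal C}$; (b) if $\sigma'=\sigma$ and there is $e\in E$ with $\eta'=\eta^e$, $\gamma_\eta(e)=0$ and $\delta_\sigma(e)=1$, then $c((\eta,\sigma),(\eta',\sigma'))=\frac12\big((1-p)\mathbf 1_{\eta(e)=1}+p\mathbf 1_{\eta(e)=0}\big)\mathbf 1_{(\eta,\sigma)\in\mathcal C}$; (c) if there are $x\in V$ and $e\in E_x$ with $\eta'=\eta^e$, $\gamma_\eta(e)=0$, $\eta(e)=\delta_\sigma(e)$, and $\sigma'(y)=-\sigma(y)$ for the vertices $y$ connected to $x$ by an open path of $\eta$ not using $e$ (including $y=x$), $\sigma'(y)=\sigma(y)$ otherwise, then $c((\eta,\sigma),(\eta',\sigma'))=\frac14\big((1-p)\mathbf 1_{\eta(e)=1}\mathbf 1_{(\eta,\sigma)\in\mathcal C}+p\mathbf 1_{\eta(e)=0}\mathbf 1_{(\eta',\sigma')\in\mathcal C}\big)$; (d) all other off-diagonal rates are $0$, and diagonal rates are minus the sum of off-diagonal rates of the row. Then these rates satisfy the detailed balance equation $IP(\eta,\sigma)c((\eta,\sigma),(\eta',\sigma'))=IP(\eta',\sigma')c((\eta',\sigma'),(\eta,\sigma))$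 for all pairs of states.
   Context: Edge configurations $\eta\in\{0,1\}^E$ (1 = open), spin configurations $\sigma\in\{-1,1\}^V$. For $e=\langle x,y\rangle$, $\delta_\sigma(e)=\mathbf 1_{\sigma(x)=\sigma(y)}$. $\mathcal C=\{(\eta,\sigma):\eta(e)\le\delta_\sigma(e)\ \forall e\in E\}$. $IP(\eta,\sigma)=\frac1Z\prod_{e\in E}\big(p\mathbf 1_{\eta(e)=1}\delta_\sigma(e)+(1-p)\mathbf 1_{\eta(e)=0}\big)$ with $Z$ the normalizing constant. $E_x$ is the set of edges with endvertex $x$; $\eta^e$ is $\eta$ with the value at $e$ changed. For $e=\langle x,y\rangle$, $\gamma_\eta(e)=1$ if $x,y$ are connected by a path of open edges of $\eta$ not using $e$, and $0$ otherwise. *)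

theory Defs
  imports Complex_Main
begin

(* Graph: vertex set V :: 'v set, edge set E :: 'v set set (each edge is a
   two-element set {x,y} of vertices).
   Edge configuration eta :: 'v set => bool (True = open), extended by False off E.
   Spin configuration sigma :: 'v => int with values in {-1,1} on V, extended by 1 off V. *)

type_synonym 'v state = "('v set \<Rightarrow> bool) \<times> ('v \<Rightarrow> int)"

definition states :: "'v set \<Rightarrow> 'v set set \<Rightarrow> 'v state set" where
  "states V E = {(\<eta>, \<sigma>). (\<forall>e. e \<notin> E \<longrightarrow> \<not> \<eta> e) \<and>
                              (\<forall>v\<in>V. \<sigma> v \<in> {-1, 1}) \<and> (\<forall>v. v \<notin> V \<longrightarrow> \<sigma> v = 1)}"

definition delta :: "('v \<Rightarrow> int) \<Rightarrow> 'v set \<Rightarrow> bool" where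
  "delta \<sigma> e \<longleftrightarrow> (\<exists>x y. e = {x, y} \<and> \<sigma> x = \<sigma> y)"

definition flip :: "('v set \<Rightarrow> bool) \<Rightarrow> 'v set \<Rightarrow> ('v set \<Rightarrow> bool)" where
  "flip \<eta> e = \<eta>(e := \<not> \<eta> e)"

definition conn_without :: "'v set set \<Rightarrow> ('v set \<Rightarrow> bool) \<Rightarrow> 'v set \<Rightarrow> 'v \<Rightarrow> 'v \<Rightarrow> bool" where
  "conn_without E \<eta> e x y \<longleftrightarrow>
     (x, y) \<in> {(a, b). \<exists>f\<in>E. f \<noteq> e \<and> \<eta> f \<and> f = {a, b}}\<^sup>*"

definition gamma :: "'v set set \<Rightarrow> ('v set \<Rightarrow> bool) \<Rightarrow> 'v set \<Rightarrow> bool" where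
  "gamma E \<eta> e \<longleftrightarrow> (\<exists>x y. e = {x, y} \<and> conn_without E \<eta> e x y)"

definition inC :: "'v set set \<Rightarrow> 'v state \<Rightarrow> bool" where
  "inC E s \<longleftrightarrow> (\<forall>e\<in>E. fst s e \<longrightarrow> delta (snd s) e)"

definition weight :: "'v set set \<Rightarrow> real \<Rightarrow> 'v state \<Rightarrow> real" where
  "weight E p s = (\<Prod>e\<in>E. (if fst s e \<and> delta (snd s) e then p else 0)
                            + (if \<not> fst s e then 1 - p else 0))"

definition Zconst :: "'v set \<Rightarrow> 'v set set \<Rightarrow> real \<Rightarrow> real" where
  "Zconst V E p = (\<Sum>s\<in>states V E. weight E p s)"

definition IP :: "'v set \<Rightarrow> 'v set set \<Rightarrow> real \<Rightarrow> 'v state \<Rightarrow> real" where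
  "IP V E p s = weight E p s / Zconst V E p"

definition bfac :: "real \<Rightarrow> ('v set \<Rightarrow> bool) \<Rightarrow> 'v set \<Rightarrow> real" where
  "bfac p \<eta> e = (if \<eta> e then 1 - p else p)"

definition condA :: "'v set set \<Rightarrow> 'v state \<Rightarrow> 'v state \<Rightarrow> 'v set \<Rightarrow> bool" where
  "condA E s s' e \<longleftrightarrow> e \<in> E \<and> snd s' = snd s \<and> fst s' = flip (fst s) e \<and> gamma E (fst s) e"

definition condB :: "'v set set \<Rightarrow> 'v state \<Rightarrow> 'v state \<Rightarrow> 'v set \<Rightarrow> bool" where
  "condB E s s' e \<longleftrightarrow> e \<in> E \<and> snd s' = snd s \<and> fst s' = flip (fst s) e
                       \<and> \<not> gamma E (fst s) e \<and> delta (snd s) e"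

definition condC :: "'v set \<Rightarrow> 'v set set \<Rightarrow> 'v state \<Rightarrow> 'v state \<Rightarrow> 'v \<Rightarrow> 'v set \<Rightarrow> bool" where
  "condC V E s s' x e \<longleftrightarrow> x \<in> V \<and> e \<in> E \<and> x \<in> e \<and> fst s' = flip (fst s) e
      \<and> \<not> gamma E (fst s) e \<and> fst s e = delta (snd s) e
      \<and> (\<forall>y. snd s' y = (if conn_without E (fst s) e x y then - snd s y else snd s y))"

(* off-diagonal rate; in each case the edge e (and vertex x) is unique *)
definition offrate :: "'v set \<Rightarrow> 'v set set \<Rightarrow> real \<Rightarrow> 'v state \<Rightarrow> 'v state \<Rightarrow> real" where
  "offrate V E p s s' =
     (if \<exists>e. condA E s s' e then
        (let e = (SOME e. condA E s s' e) in
           bfac p (fst s) e * (if inC E s then 1 else 0))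
      else if \<exists>e. condB E s s' e then
        (let e = (SOME e. condB E s s' e) in
           1/2 * bfac p (fst s) e * (if inC E s then 1 else 0))
      else if \<exists>x e. condC V E s s' x e then
        (let e = (SOME e. \<exists>x. condC V E s s' x e) in
           1/4 * ((1 - p) * (if fst s e then 1 else 0) * (if inC E s then 1 else 0)
                  + p * (if \<not> fst s e then 1 else 0) * (if inC E s' then 1 else 0)))
      else 0)"

definition rate :: "'v set \<Rightarrow> 'v set set \<Rightarrow> real \<Rightarrow> 'v state \<Rightarrow> 'v state \<Rightarrow> real" where
  "rate V E p s s' =
     (if s' = s then - (\<Sum>t\<in>states V E - {s}. offrate V E p s t) else offrate V E p s s')"

end

theory Submission
  imports Defs
begin

(* The weight of a state is a product of one factor per edge, and every transition changes
   the edge configuration at exactly one edge e.  On all other edges the factors of the two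
   states agree -- in case (c) because flipping the spins of a whole open cluster keeps the
   endpoints of each open edge equal or unequal.  So detailed balance reduces to the factor
   at e times the rate, where p (1 - p) appears on both sides, together with the fact that
   either both states lie in C or neither does.  The one subtle case is (a) with unequal
   spins at e: the open path around e forces equal spins at the endpoints of e in C, so both
   sides vanish.  The identity is algebraic in p. *)

lemma delta_doubleton [simp]: "delta \<sigma> {u, v} \<longleftrightarrow> \<sigma> u = \<sigma> v"
  unfolding delta_def by (auto simp: doubleton_eq_iff)

lemma flip_same [simp]: "flip \<eta> e e \<longleftrightarrow> \<not> \<eta> e"
  by (simp add: flip_def)

lemma flip_other [simp]: "f \<noteq> e \<Longrightarrow> flip \<eta> e f = \<eta> f"
  by (simp add: flip_def)

lemma flip_flip [simp]: "flip (flip \<eta> e) e = \<eta>"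
  by (simp add: flip_def)

lemma flip_eq_flip_iff [simp]: "flip \<eta> a = flip \<eta> b \<longleftrightarrow> a = b"
  by (metis flip_other flip_same)

lemma conn_without_refl [simp]: "conn_without E \<eta> e x x"
  by (simp add: conn_without_def)

lemma conn_without_edge:
  assumes "{u, v} \<in> E" "{u, v} \<noteq> e" "\<eta> {u, v}"
  shows "conn_without E \<eta> e u v"
proof -
  have "(u, v) \<in> {(a, b). \<exists>f\<in>E. f \<noteq> e \<and> \<eta> f \<and> f = {a, b}}"
    using assms by auto
  then show ?thesis
    unfolding conn_without_def by (rule r_into_rtrancl)
qed

lemma conn_without_trans:
  "conn_without E \<eta> e x y \<Longrightarrow> conn_without E \<eta> e y z \<Longrightarrow> conn_without E \<eta> e x z"
  unfolding conn_without_def by (rule rtrancl_trans)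

lemma conn_without_sym:
  assumes "conn_without E \<eta> e x y"
  shows "conn_without E \<eta> e y x"
proof -
  have "sym {(a, b). \<exists>f\<in>E. f \<noteq> e \<and> \<eta> f \<and> f = {a, b}}"
    by (auto simp: sym_def insert_commute)
  then show ?thesis
    using assms unfolding conn_without_def by (meson sym_rtrancl symD)
qed

lemma conn_without_flip [simp]: "conn_without E (flip \<eta> e) e = conn_without E \<eta> e"
proof -
  have "{(a, b). \<exists>f\<in>E. f \<noteq> e \<and> flip \<eta> e f \<and> f = {a, b}}
      = {(a, b). \<exists>f\<in>E. f \<noteq> e \<and> \<eta> f \<and> f = {a, b}}"
    by (auto simp: flip_def)
  then show ?thesis
    unfolding conn_without_def by simp
qed

lemma gamma_flip [simp]: "gamma E (flip \<eta> e) e = gamma E \<eta> e"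
  by (simp add: gamma_def)

lemma gamma_doubleton: "gamma E \<eta> {a, b} \<longleftrightarrow> conn_without E \<eta> {a, b} a b"
proof
  assume "gamma E \<eta> {a, b}"
  then obtain x y where "{a, b} = {x, y}" "conn_without E \<eta> {a, b} x y"
    unfolding gamma_def by auto
  then show "conn_without E \<eta> {a, b} a b"
    by (metis conn_without_sym doubleton_eq_iff)
qed (auto simp: gamma_def)

lemma conn_without_imp_spin_eq:
  assumes "conn_without E \<eta> e u v" and "\<forall>f\<in>E - {e}. \<eta> f \<longrightarrow> delta \<sigma> f"
  shows "\<sigma> u = \<sigma> v"
  using assms(1) unfolding conn_without_def
proof (induction rule: rtrancl_induct)
  case (step y z)
  then show ?case
    using assms(2) by auto
qed simp

lemma gamma_imp_delta:
  assumes "gamma E \<eta> e" and "\<forall>f\<in>E - {e}. \<eta> f \<longrightarrow> delta \<sigma> f"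
  shows "delta \<sigma> e"
proof -
  obtain a b where "e = {a, b}" "conn_without E \<eta> e a b"
    using assms(1) unfolding gamma_def by blast
  then show ?thesis
    using conn_without_imp_spin_eq[OF _ assms(2)] by simp
qed

lemma cluster_flip_preserves_delta:
  assumes "{u, v} \<in> E" "{u, v} \<noteq> e" "\<eta> {u, v}"
    and "\<forall>y. \<sigma>' y = (if conn_without E \<eta> e x y then - \<sigma> y else \<sigma> y)"
  shows "delta \<sigma>' {u, v} \<longleftrightarrow> delta \<sigma> {u, v}"
proof -
  have "conn_without E \<eta> e x u \<longleftrightarrow> conn_without E \<eta> e x v"
    using conn_without_edge[of u v E e \<eta>, OF assms(1-3)] conn_without_sym conn_without_trans
    by metis
  then show ?thesis
    using assms(4) by auto
qed

definition edge_factor :: "real \<Rightarrow> ('v set \<Rightarrow> bool) \<Rightarrow> ('v \<Rightarrow> int) \<Rightarrow> 'v set \<Rightarrow> real" where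
  "edge_factor p \<eta> \<sigma> f = (if \<eta> f \<and> delta \<sigma> f then p else 0) + (if \<not> \<eta> f then 1 - p else 0)"

lemma weight_mult_eq_by_edge:
  assumes "finite E" "e \<in> E"
    and "\<And>f. f \<in> E - {e} \<Longrightarrow> edge_factor p \<eta> \<sigma> f = edge_factor p \<eta>' \<sigma>' f"
    and "edge_factor p \<eta> \<sigma> e * r = edge_factor p \<eta>' \<sigma>' e * r'"
  shows "weight E p (\<eta>, \<sigma>) * r = weight E p (\<eta>', \<sigma>') * r'"
proof -
  have split: "weight E p (\<eta>, \<sigma>)
      = edge_factor p \<eta> \<sigma> e * (\<Prod>f\<in>E - {e}. edge_factor p \<eta> \<sigma> f)" for \<eta> \<sigma>
    using prod.remove[OF assms(1,2), of "edge_factor p \<eta> \<sigma>"]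
    by (simp add: weight_def edge_factor_def)
  have "(\<Prod>f\<in>E - {e}. edge_factor p \<eta> \<sigma> f) = (\<Prod>f\<in>E - {e}. edge_factor p \<eta>' \<sigma>' f)"
    using assms(3) by (rule prod.cong[OF refl])
  then show ?thesis
    using assms(4) by (simp add: split mult_ac)
qed

lemma inC_split_edge:
  "e \<in> E \<Longrightarrow>
    inC E (\<eta>, \<sigma>) \<longleftrightarrow> (\<forall>f\<in>E - {e}. \<eta> f \<longrightarrow> delta \<sigma> f) \<and> (\<eta> e \<longrightarrow> delta \<sigma> e)"
  unfolding inC_def by auto

lemma some_flipped_edge:
  assumes "P e" and "\<And>e'. P e' \<Longrightarrow> \<eta>' = flip \<eta> e'"
  shows "(SOME e. P e) = e"
  using assms by (intro some_equality) (metis flip_eq_flip_iff)+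

lemma offrate_condA:
  assumes "condA E s s' e"
  shows "offrate V E p s s' = bfac p (fst s) e * (if inC E s then 1 else 0)"
proof -
  have "(SOME e. condA E s s' e) = e"
    using assms by (rule some_flipped_edge[where \<eta>' = "fst s'"]) (simp add: condA_def)
  then show ?thesis
    using assms unfolding offrate_def by auto
qed

lemma offrate_condB:
  assumes "condB E s s' e"
  shows "offrate V E p s s' = 1/2 * bfac p (fst s) e * (if inC E s then 1 else 0)"
proof -
  have "\<not> condA E s s' e'" for e'
    using assms unfolding condA_def condB_def by (metis flip_eq_flip_iff)
  moreover have "(SOME e. condB E s s' e) = e"
    using assms by (rule some_flipped_edge[where \<eta>' = "fst s'"]) (simp add: condB_def)
  ultimately show ?thesis
    using assms unfolding offrate_def by auto
qed

lemma offrate_condC: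
  assumes "condC V E s s' x e" and "snd s' \<noteq> snd s"
  shows "offrate V E p s s'
    = 1/4 * ((1 - p) * (if fst s e then 1 else 0) * (if inC E s then 1 else 0)
             + p * (if \<not> fst s e then 1 else 0) * (if inC E s' then 1 else 0))"
proof -
  have "\<not> condA E s s' e'" "\<not> condB E s s' e'" for e'
    using assms(2) unfolding condA_def condB_def by auto
  moreover have "(SOME e. \<exists>x. condC V E s s' x e) = e"
    using assms(1)
    by (rule some_flipped_edge[where \<eta>' = "fst s'", OF exI]) (auto simp: condC_def)
  ultimately show ?thesis
    using assms(1) unfolding offrate_def by auto
qed

lemma offrate_eq_0:
  assumes "\<nexists>e. condA E s s' e" "\<nexists>e. condB E s s' e" "\<nexists>x e. condC V E s s' x e"
  shows "offrate V E p s s' = 0"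
  using assms unfolding offrate_def by auto

lemma condA_sym: "condA E s s' e \<Longrightarrow> condA E s' s e"
  unfolding condA_def by auto

lemma condB_sym: "condB E s s' e \<Longrightarrow> condB E s' s e"
  unfolding condB_def by auto

lemma condC_delta_swap:
  assumes "E \<subseteq> {{x, y} | x y. x \<in> V \<and> y \<in> V \<and> x \<noteq> y}"
    and "(\<eta>, \<sigma>) \<in> states V E" and "condC V E (\<eta>, \<sigma>) (\<eta>', \<sigma>') x e"
  shows "delta \<sigma>' e \<longleftrightarrow> \<not> delta \<sigma> e"
proof -
  from assms(3) have "x \<in> V" "e \<in> E" "x \<in> e" "\<not> gamma E \<eta> e"
    and \<sigma>': "\<forall>y. \<sigma>' y = (if conn_without E \<eta> e x y then - \<sigma> y else \<sigma> y)"
    unfolding condC_def by auto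
  moreover from assms(1) \<open>e \<in> E\<close> \<open>x \<in> e\<close> obtain b where e: "e = {x, b}" "b \<in> V"
    by (auto simp: doubleton_eq_iff)
  ultimately have "\<not> conn_without E \<eta> e x b"
    by (simp add: gamma_doubleton)
  then have "\<sigma>' x = - \<sigma> x" "\<sigma>' b = \<sigma> b"
    using \<sigma>' by auto
  moreover have "\<sigma> x \<in> {-1, 1}" "\<sigma> b \<in> {-1, 1}"
    using assms(2) \<open>x \<in> V\<close> \<open>b \<in> V\<close> unfolding states_def by auto
  ultimately show ?thesis
    using e by auto
qed

lemma condC_sym:
  assumes "E \<subseteq> {{x, y} | x y. x \<in> V \<and> y \<in> V \<and> x \<noteq> y}"
    and "s \<in> states V E" and "condC V E s s' x e"
  shows "condC V E s' s x e"
proof -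
  obtain \<eta> \<sigma> \<eta>' \<sigma>' where "s = (\<eta>, \<sigma>)" "s' = (\<eta>', \<sigma>')"
    by fastforce
  then show ?thesis
    using assms condC_delta_swap[OF assms(1), of \<eta> \<sigma> \<eta>' \<sigma>' x e] unfolding condC_def by auto
qed

lemma weight_balance_edge_flip:
  assumes "finite E" "e \<in> E" "gamma E \<eta> e \<or> delta \<sigma> e"
  shows "weight E p (\<eta>, \<sigma>) * (bfac p \<eta> e * (if inC E (\<eta>, \<sigma>) then 1 else 0))
       = weight E p (flip \<eta> e, \<sigma>) * (bfac p (flip \<eta> e) e * (if inC E (flip \<eta> e, \<sigma>) then 1 else 0))"
proof (cases "delta \<sigma> e")
  case True
  then have "inC E (flip \<eta> e, \<sigma>) \<longleftrightarrow> inC E (\<eta>, \<sigma>)"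
    using assms(2) by (simp add: inC_split_edge)
  then show ?thesis
    using True by (intro weight_mult_eq_by_edge[OF assms(1,2)])
      (auto simp: edge_factor_def bfac_def)
next
  case False
  with assms(3) have "\<not> (\<forall>f\<in>E - {e}. \<eta> f \<longrightarrow> delta \<sigma> f)"
    using gamma_imp_delta by blast
  then have "\<not> inC E (\<eta>, \<sigma>)" "\<not> inC E (flip \<eta> e, \<sigma>)"
    using assms(2) by (auto simp: inC_split_edge)
  then show ?thesis
    by simp
qed

lemma weight_offrate_balance_condA:
  assumes "finite E" "condA E s s' e"
  shows "weight E p s * offrate V E p s s' = weight E p s' * offrate V E p s' s"
proof -
  obtain \<eta> \<sigma> where "s = (\<eta>, \<sigma>)" "s' = (flip \<eta> e, \<sigma>)" and "e \<in> E" "gamma E \<eta> e"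
    using assms(2) unfolding condA_def by (metis prod.collapse)
  then show ?thesis
    unfolding offrate_condA[OF assms(2)] offrate_condA[OF condA_sym[OF assms(2)]]
    using weight_balance_edge_flip[OF assms(1), of e \<eta> \<sigma> p] by simp
qed

lemma weight_offrate_balance_condB:
  assumes "finite E" "condB E s s' e"
  shows "weight E p s * offrate V E p s s' = weight E p s' * offrate V E p s' s"
proof -
  obtain \<eta> \<sigma> where "s = (\<eta>, \<sigma>)" "s' = (flip \<eta> e, \<sigma>)" and "e \<in> E" "delta \<sigma> e"
    using assms(2) unfolding condB_def by (metis prod.collapse)
  then show ?thesis
    unfolding offrate_condB[OF assms(2)] offrate_condB[OF condB_sym[OF assms(2)]]
    using weight_balance_edge_flip[OF assms(1), of e \<eta> \<sigma> p] by (simp add: mult_ac)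
qed

lemma condC_agrees_off_edge:
  assumes "E \<subseteq> {{x, y} | x y. x \<in> V \<and> y \<in> V \<and> x \<noteq> y}"
    and "condC V E (\<eta>, \<sigma>) (\<eta>', \<sigma>') x e" and "f \<in> E - {e}"
  shows "\<eta>' f = \<eta> f \<and> (\<eta> f \<longrightarrow> (delta \<sigma>' f \<longleftrightarrow> delta \<sigma> f))"
proof -
  obtain u v where "f = {u, v}"
    using assms(1,3) by blast
  then show ?thesis
    using assms(2,3) cluster_flip_preserves_delta[of u v E e \<eta> \<sigma>' x \<sigma>]
    unfolding condC_def by auto
qed

lemma inC_condC_iff:
  assumes "E \<subseteq> {{x, y} | x y. x \<in> V \<and> y \<in> V \<and> x \<noteq> y}"
    and "(\<eta>, \<sigma>) \<in> states V E" and "condC V E (\<eta>, \<sigma>) (\<eta>', \<sigma>') x e"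
  shows "inC E (\<eta>', \<sigma>') \<longleftrightarrow> inC E (\<eta>, \<sigma>)"
proof -
  have "e \<in> E" "\<eta> e = delta \<sigma> e" "\<eta>' e = delta \<sigma>' e"
    using assms(3) condC_sym[OF assms] unfolding condC_def by auto
  then show ?thesis
    using condC_agrees_off_edge[OF assms(1,3)] by (auto simp: inC_split_edge)
qed

lemma weight_offrate_balance_condC:
  assumes "E \<subseteq> {{x, y} | x y. x \<in> V \<and> y \<in> V \<and> x \<noteq> y}" and "finite E"
    and "s \<in> states V E" and "condC V E s s' x e"
  shows "weight E p s * offrate V E p s s' = weight E p s' * offrate V E p s' s"
proof -
  obtain \<eta> \<sigma> \<eta>' \<sigma>' where s: "s = (\<eta>, \<sigma>)" "s' = (\<eta>', \<sigma>')"
    by fastforce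
  note states = assms(3)[unfolded s] and c = assms(4)[unfolded s]
  have "e \<in> E" "\<eta>' e \<longleftrightarrow> \<not> \<eta> e" "\<eta> e = delta \<sigma> e"
    and \<sigma>: "delta \<sigma>' e \<longleftrightarrow> \<not> delta \<sigma> e"
    using c condC_delta_swap[OF assms(1) states c] unfolding condC_def by auto
  then have "\<sigma>' \<noteq> \<sigma>"
    by auto
  have rate: "offrate V E p (\<eta>, \<sigma>) (\<eta>', \<sigma>')
      = 1/4 * ((1 - p) * (if \<eta> e then 1 else 0) * (if inC E (\<eta>, \<sigma>) then 1 else 0)
               + p * (if \<not> \<eta> e then 1 else 0) * (if inC E (\<eta>', \<sigma>') then 1 else 0))"
    using offrate_condC[OF c] \<open>\<sigma>' \<noteq> \<sigma>\<close> by simp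
  have rate': "offrate V E p (\<eta>', \<sigma>') (\<eta>, \<sigma>)
      = 1/4 * ((1 - p) * (if \<eta>' e then 1 else 0) * (if inC E (\<eta>', \<sigma>') then 1 else 0)
               + p * (if \<not> \<eta>' e then 1 else 0) * (if inC E (\<eta>, \<sigma>) then 1 else 0))"
    using offrate_condC[OF condC_sym[OF assms(1) states c]] \<open>\<sigma>' \<noteq> \<sigma>\<close> by simp
  show ?thesis
    unfolding s rate rate' inC_condC_iff[OF assms(1) states c]
    using \<open>e \<in> E\<close> \<open>\<eta>' e \<longleftrightarrow> \<not> \<eta> e\<close> \<open>\<eta> e = delta \<sigma> e\<close> \<sigma>
      condC_agrees_off_edge[OF assms(1) c]
    by (intro weight_mult_eq_by_edge[OF assms(2)]) (auto simp: edge_factor_def)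
qed

lemma weight_offrate_balance:
  assumes "E \<subseteq> {{x, y} | x y. x \<in> V \<and> y \<in> V \<and> x \<noteq> y}" and "finite E"
    and "s \<in> states V E" and "s' \<in> states V E"
  shows "weight E p s * offrate V E p s s' = weight E p s' * offrate V E p s' s"
proof -
  consider (A) e where "condA E s s' e" | (B) e where "condB E s s' e"
    | (C) x e where "condC V E s s' x e"
    | (none) "\<nexists>e. condA E s s' e" "\<nexists>e. condB E s s' e" "\<nexists>x e. condC V E s s' x e"
    by blast
  then show ?thesis
  proof cases
    case A
    then show ?thesis
      using assms(2) by (rule weight_offrate_balance_condA[rotated])
  next
    case B
    then show ?thesis
      using assms(2) by (rule weight_offrate_balance_condB[rotated])
  next
    case C
    then show ?thesis
      using assms(1-3) by (rule weight_offrate_balance_condC[rotated 3])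
  next
    case none
    then have "\<nexists>e. condA E s' s e" "\<nexists>e. condB E s' s e" "\<nexists>x e. condC V E s' s x e"
      using condA_sym condB_sym condC_sym[OF assms(1,4)] by blast+
    then show ?thesis
      using none by (simp add: offrate_eq_0)
  qed
qed

lemma finite_simple_edges:
  "finite V \<Longrightarrow> finite {{x, y} | x y. x \<in> V \<and> y \<in> V \<and> x \<noteq> y}"
  by (rule finite_subset[of _ "Pow V"]) auto

theorem proposition7:
  fixes V :: "'v set" and E :: "'v set set" and p :: real
  assumes "finite V"
    and "E \<subseteq> {{x, y} | x y. x \<in> V \<and> y \<in> V \<and> x \<noteq> y}"
    and "0 \<le> p" and "p \<le> 1"
    and "s \<in> states V E" and "s' \<in> states V E"
  shows "IP V E p s * rate V E p s s' = IP V E p s' * rate V E p s' s"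
proof (cases "s = s'")
  case False
  have "finite E"
    using assms(1,2) finite_simple_edges finite_subset by blast
  show ?thesis
    using False weight_offrate_balance[OF assms(2) \<open>finite E\<close> assms(5,6)]
    unfolding IP_def rate_def by simp
qed simp

end
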